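(* Consider the three-dimensional stochastic Maxwell equations with multiplicative noise written in the stochastic Hamiltonian form $$\mathbf{K}\,{\rm d}_{t}\mathcal{E}+\mathbf{L}_{1}\mathcal{E}_{x}{\rm d}t+\mathbf{L}_{2}\mathcal{E}_{y}{\rm d}t+\mathbf{L}_{3}\mathcal{E}_{z}{\rm d}t=\nabla S(\mathcal{E})\circ{\rm d}W(t),$$ and the stochastic Runge-Kutta method described in the context, with temporal coefficients $(a_{kj},b_k)_{k,j=1}^r$ and spatial coefficients $(\widetilde{a}_{mn},\widetilde{b}_m)_{m,n=1}^s$ in $x$, $(\overline{a}_{pq},\overline{b}_p)_{p,q=1}^\iota$ in $y$, $(\widehat{a}_{lv},\widehat{b}_l)_{l,v=1}^\sigma$ in $z$. Assume $$b_kb_j-b_ka_{kj}-b_ja_{jk}=0,\quad \overline{b}_p\overline{b}_q-\overline{b}_p\overline{a}_{pq}-\overline{b}_q\overline a_{qp}=0,$$ $$\widetilde{b}_m\widetilde{b}_n-\widetilde{b}_m\widetilde{a}_{mn}-\widetilde{b}_n\widetilde{a}_{nm}=0,\quad \widehat{b}_l\widehat{b}_v-\widehat{b}_l\widehat{a}_{lv}-\widehat{b}_v\widehat{a}_{vl}=0$$ for all $k,j=1,\dots,r$, $m,n=1,\dots,s$, $p,q=1,\dots,\iota$, $l,v=1,\dots,\sigma$. Then the method satisfies, almost surely, the discrete stochastic multi-symplectic conservation law $$\frac{\omega^{\rho+1}-\omega^{\rho}}{\tau}+\frac{\kappa_{i_1+1}^{(1)}-\kappa_{i_1}^{(1)}}{\Delta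 x}+\frac{\kappa_{i_2+1}^{(2)}-\kappa_{i_2}^{(2)}}{\Delta y}+\frac{\kappa_{i_3+1}^{(3)}-\kappa_{i_3}^{(3)}}{\Delta z}=0,$$ where $\omega^\rho=\frac{1}{2}\sum_{m=1}^{s}\sum_{p=1}^{\iota}\sum_{l=1}^{\sigma}\widetilde{b}_m\overline{b}_p\widehat{b}_l\,{\rm d}\mathcal{E}_{mpl}^{\rho}\wedge \mathbf{K}{\rm d}\mathcal{E}_{mpl}^{\rho}$, $\kappa_{i_1}^{(1)}=\frac{1}{2}\sum_{k=1}^{r}\sum_{p=1}^{\iota}\sum_{l=1}^{\sigma}b_k\overline{b}_p\widehat{b}_l\,{\rm d}\mathcal{E}_{i_1 pl}^{k}\wedge \mathbf{L}_1{\rm d}\mathcal{E}_{i_1 pl}^{k}$, $\kappa_{i_2}^{(2)}=\frac{1}{2}\sum_{k=1}^{r}\sum_{m=1}^{s}\sum_{l=1}^{\sigma}b_k\widetilde{b}_m\widehat{b}_l\,{\rm d}\mathcal{E}_{mi_2 l}^{k}\wedge \mathbf{L}_2{\rm d}\mathcal{E}_{mi_2 l}^{k}$, $\kappa_{i_3}^{(3)}=\frac{1}{2}\sum_{k=1}^{r}\sum_{m=1}^{s}\sum_{p=1}^{\iota}b_k\widetilde{b}_m\overline{b}_p\,{\rm d}\mathcal{E}_{mpi_3}^{k}\wedge \mathbf{L}_3{\rm d}\mathcal{E}_{mpi_3}^{k}$.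
   Context: $\mathcal{E}=(H^T,E^T)^T\in\mathbb{R}^6$ with $H=(H_1,H_2,H_3)$, $E=(E_1,E_2,E_3)$; $S(\mathcal{E})=\frac{\lambda}{2}(|E_1|^2+|E_2|^2+|E_3|^2+|H_1|^2+|H_2|^2+|H_3|^2)$ for a real constant $\lambda$; $\mathbf{K}=\begin{pmatrix}0&-I_3\\ I_3&0\end{pmatrix}$, $\mathbf{L}_i=\begin{pmatrix}\mathcal{D}_i&0\\0&\mathcal{D}_i\end{pmatrix}$ with $\mathcal{D}_1=\begin{pmatrix}0&0&0\\0&0&-1\\0&1&0\end{pmatrix}$, $\mathcal{D}_2=\begin{pmatrix}0&0&1\\0&0&0\\-1&0&0\end{pmatrix}$, $\mathcal{D}_3=\begin{pmatrix}0&-1&0\\1&0&0\\0&0&0\end{pmatrix}$. $W$ is a $Q$-Wiener process and the equation is in the Stratonovich sense. The method, with time step $\tau$ and space steps $\Delta x,\Delta y,\Delta z$, has on each space-time cell stage values $\Upsilon_{mplk}\in\mathbb{R}^6$, discrete derivatives $\delta_t\Upsilon_{mplk},\delta_x\Upsilon_{mplk},\delta_y\Upsilon_{mplk},\delta_z\Upsilon_{mplk}$, time-level values $\mathcal{E}^\rho_{mpl},\mathcal{E}^{\rho+1}_{mpl}$, and face values $\mathcal{E}^k_{i_1pl},\mathcal{E}^k_{(i_1+1)pl}$, $\mathcal{E}^k_{mi_2l},\mathcal{E}^k_{m(i_2+1)l}$, $\mathcal{E}^k_{mpi_3},\mathcal{E}^k_{mp(i_3+1)}$, related by $\Upsilon_{mplk}=\mathcal{E}_{mpl}^{\rho}+\tau\sum_{j}a_{kj}\delta_t\Upsilon_{mplj}$,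 $\mathcal{E}_{mpl}^{\rho+1}=\mathcal{E}_{mpl}^{\rho}+\tau\sum_{k}b_{k}\delta_t\Upsilon_{mplk}$, $\Upsilon_{mplk}=\mathcal{E}_{i_1pl}^{k}+\Delta x\sum_{n}\widetilde{a}_{mn}\delta_{x}\Upsilon_{nplk}$, $\mathcal{E}_{(i_1+1)pl}^{k}=\mathcal{E}_{i_1pl}^{k}+\Delta x\sum_{m}\widetilde{b}_{m}\delta_{x}\Upsilon_{mplk}$, $\Upsilon_{mplk}=\mathcal{E}_{mi_2l}^{k}+\Delta y\sum_{q}\overline{a}_{pq}\delta_{y}\Upsilon_{mqlk}$, $\mathcal{E}_{m(i_{2}+1)l}^{k}=\mathcal{E}_{mi_2l}^{k}+\Delta y\sum_{p}\overline{b}_{p}\delta_{y}\Upsilon_{mplk}$, $\Upsilon_{mplk}=\mathcal{E}_{mpi_3}^{k}+\Delta z\sum_{v}\widehat{a}_{lv}\delta_{z}\Upsilon_{mpvk}$, $\mathcal{E}_{mp(i_3+1)}^{k}=\mathcal{E}_{mpi_3}^{k}+\Delta z\sum_{u}\widehat{b}_{u}\delta_{z}\Upsilon_{mpuk}$, $\tau\mathbf{K}\delta_{t}\Upsilon_{mplk}+\tau\sum_{i=1}^3\mathbf{L}_{i}\delta_{x_i}\Upsilon_{mplk}=\nabla S(\Upsilon_{mplk})\Delta W$, where $(\delta_{x_1},\delta_{x_2},\delta_{x_3})=(\delta_x,\delta_y,\delta_z)$ and $\Delta W$ is the real-valued Wiener increment over the time step at the corresponding stage point. ${\rm d}$ is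 the exterior differential in phase space and ${\rm d}\mathcal{E}\wedge\mathbf{M}{\rm d}\mathcal{E}=\sum_{a,b}\mathbf{M}_{ab}{\rm d}\mathcal{E}_a\wedge{\rm d}\mathcal{E}_b$. *)

theory Defs
  imports "HOL-Analysis.Analysis"
begin

text \<open>State vector E = (H1,H2,H3,E1,E2,E3) in R^6; components indexed 1..6 (via vector).\<close>

definition Kmat :: "real^6^6" where
  "Kmat = vector [vector [0,0,0,-1,0,0], vector [0,0,0,0,-1,0], vector [0,0,0,0,0,-1],
                  vector [1,0,0,0,0,0],  vector [0,1,0,0,0,0],  vector [0,0,1,0,0,0]]"

text \<open>L_i = diag(D_i, D_i).\<close>
definition L1mat :: "real^6^6" where
  "L1mat = vector [vector [0,0,0,0,0,0], vector [0,0,-1,0,0,0], vector [0,1,0,0,0,0],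
                   vector [0,0,0,0,0,0], vector [0,0,0,0,0,-1], vector [0,0,0,0,1,0]]"

definition L2mat :: "real^6^6" where
  "L2mat = vector [vector [0,0,1,0,0,0],  vector [0,0,0,0,0,0], vector [-1,0,0,0,0,0],
                   vector [0,0,0,0,0,1],  vector [0,0,0,0,0,0], vector [0,0,0,-1,0,0]]"

definition L3mat :: "real^6^6" where
  "L3mat = vector [vector [0,-1,0,0,0,0], vector [1,0,0,0,0,0], vector [0,0,0,0,0,0],
                   vector [0,0,0,0,-1,0], vector [0,0,0,1,0,0], vector [0,0,0,0,0,0]]"

definition Sfun :: "real \<Rightarrow> real^6 \<Rightarrow> real" where
  "Sfun lam E = lam / 2 * (\<Sum>i\<in>UNIV. (E $ i)^2)"

definition gradS :: "real \<Rightarrow> real^6 \<Rightarrow> real^6" where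
  "gradS lam E = lam *\<^sub>R E"

lemma gradS_is_gradient:
  "(Sfun lam has_derivative (\<lambda>h. gradS lam E \<bullet> h)) (at E)"
proof -
  have "(Sfun lam has_derivative (\<lambda>h. lam / 2 * (\<Sum>i\<in>UNIV. 2 * (E $ i) * (h $ i)))) (at E)"
    unfolding Sfun_def
    by (auto intro!: derivative_eq_intros bounded_linear.has_derivative[OF bounded_linear_vec_nth] ext sum.cong simp: power2_eq_square algebra_simps)
  moreover have "(\<lambda>h. lam / 2 * (\<Sum>i\<in>UNIV. 2 * (E $ i) * (h $ i))) = (\<lambda>h. gradS lam E \<bullet> h)"
    by (auto simp: gradS_def inner_vec_def sum_distrib_left algebra_simps intro!: ext sum.cong)
  ultimately show ?thesis by simp
qed

text \<open>The 2-form dU \<and> M dU (dU the differential, a linear map from the tangent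
  space of phase space to R^6), evaluated on the tangent vectors u, v, with
  dU_a \<and> dU_b (u,v) = dU_a(u) dU_b(v) - dU_a(v) dU_b(u).\<close>
definition wedge2 :: "real^6^6 \<Rightarrow> ('a \<Rightarrow> real^6) \<Rightarrow> 'a \<Rightarrow> 'a \<Rightarrow> real" where
  "wedge2 M dU u v = (\<Sum>a\<in>UNIV. \<Sum>b\<in>UNIV. M $ a $ b * (dU u $ a * dU v $ b - dU v $ a * dU u $ b))"

end

theory Submission
  imports Defs
begin

(* Differentiating the scheme in phase space gives the same Runge-Kutta relations between the
   differentials. For a symplectic tableau (b_k b_j = b_k a_kj + b_j a_jk) the h^2 terms cancel,
   so one step in any of the four directions changes dU /\ M dU by exactly
   2 h sum_k b_k dD_k /\ M dY_k, where D_k is the discrete derivative in that direction at the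
   stage Y_k. Summing the four directions with the product weights, every stage contributes
   d(delta_t Y) /\ K dY + sum_i d(delta_i Y) /\ L_i dY. This vanishes: K and the L_i are
   skew-symmetric, and since the Hamiltonian is quadratic the differentiated stage equation makes
   K d(delta_t Y) + sum_i L_i d(delta_i Y) a scalar multiple of dY. *)

lemma exhaust_6:
  fixes x :: 6
  shows "x = 1 \<or> x = 2 \<or> x = 3 \<or> x = 4 \<or> x = 5 \<or> x = 6"
proof (induct x)
  case (of_int z)
  then have "z = 0 \<or> z = 1 \<or> z = 2 \<or> z = 3 \<or> z = 4 \<or> z = 5" by fastforce
  then show ?case by auto
qed

lemma forall_6: "(\<forall>i::6. P i) \<longleftrightarrow> P 1 \<and> P 2 \<and> P 3 \<and> P 4 \<and> P 5 \<and> P 6"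
  by (metis exhaust_6)

lemma Kmat_skew: "transpose Kmat = - Kmat"
  by (simp add: vec_eq_iff forall_6 transpose_def Kmat_def vector_def)

lemma L1mat_skew: "transpose L1mat = - L1mat"
  by (simp add: vec_eq_iff forall_6 transpose_def L1mat_def vector_def)

lemma L2mat_skew: "transpose L2mat = - L2mat"
  by (simp add: vec_eq_iff forall_6 transpose_def L2mat_def vector_def)

lemma L3mat_skew: "transpose L3mat = - L3mat"
  by (simp add: vec_eq_iff forall_6 transpose_def L3mat_def vector_def)

lemma inner_skew_matrix:
  fixes M :: "real^'n^'n"
  assumes "transpose M = - M"
  shows "x \<bullet> (M *v y) = - ((M *v x) \<bullet> y)"
proof -
  have "x \<bullet> (M *v y) = (transpose M *v x) \<bullet> y"
    by (metis dot_lmul_matrix transpose_transpose vector_transpose_matrix)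
  also have "\<dots> = - ((M *v x) \<bullet> y)"
    by (simp add: assms matrix_vector_mult_def inner_vec_def sum_negf)
  finally show ?thesis .
qed

definition wedge :: "real^'n^'n \<Rightarrow> ('a \<Rightarrow> real^'n) \<Rightarrow> ('a \<Rightarrow> real^'n) \<Rightarrow> 'a \<Rightarrow> 'a \<Rightarrow> real" where
  "wedge M dU dV u v = dU u \<bullet> (M *v dV v) - dU v \<bullet> (M *v dV u)"

lemma wedge2_eq_wedge: "wedge2 M dU u v = wedge M dU dU u v"
  by (simp add: wedge2_def wedge_def inner_vec_def matrix_vector_mult_def sum_distrib_left
      sum_subtractf algebra_simps)

lemma wedge_skew_commute:
  assumes "transpose M = - M"
  shows "wedge M dU dV u v = wedge M dV dU u v"
  using inner_skew_matrix[OF assms, of "dU u" "dV v"] inner_skew_matrix[OF assms, of "dU v" "dV u"]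
  by (simp add: wedge_def inner_commute)

lemma wedge_skew_eq:
  assumes "transpose M = - M"
  shows "wedge M dU dV u v = (M *v dU v) \<bullet> dV u - (M *v dU u) \<bullet> dV v"
  using inner_skew_matrix[OF assms, of "dU u" "dV v"] inner_skew_matrix[OF assms, of "dU v" "dV u"]
  by (simp add: wedge_def)

lemma symplectic_rk_bilinear_increment:
  fixes T :: "'v::real_inner \<Rightarrow> 'v" and g g' y y' :: "'i \<Rightarrow> 'v"
  assumes "linear T"
    and symplectic: "\<And>k j. k \<in> I \<Longrightarrow> j \<in> I \<Longrightarrow> b k * b j - b k * a k j - b j * a j k = 0"
    and e1: "e1 = e0 + h *\<^sub>R (\<Sum>k\<in>I. b k *\<^sub>R g k)"
    and f1: "f1 = f0 + h *\<^sub>R (\<Sum>k\<in>I. b k *\<^sub>R g' k)"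
    and y: "\<And>k. k \<in> I \<Longrightarrow> y k = e0 + h *\<^sub>R (\<Sum>j\<in>I. a k j *\<^sub>R g j)"
    and y': "\<And>k. k \<in> I \<Longrightarrow> y' k = f0 + h *\<^sub>R (\<Sum>j\<in>I. a k j *\<^sub>R g' j)"
  shows "e1 \<bullet> T f1 - e0 \<bullet> T f0 = h * (\<Sum>k\<in>I. b k * (g k \<bullet> T (y' k) + y k \<bullet> T (g' k)))"
proof -
  define c where "c k j = g k \<bullet> T (g' j)" for k j
  note T = linear_add[OF assms(1)] linear_scale[OF assms(1)] linear_sum[OF assms(1)]
  note expand = T inner_add_left inner_add_right inner_sum_left inner_sum_right sum_distrib_left
  have update: "e1 \<bullet> T f1 - e0 \<bullet> T f0 = h * (\<Sum>k\<in>I. b k * (g k \<bullet> T f0 + e0 \<bullet> T (g' k)))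
      + h * h * (\<Sum>k\<in>I. \<Sum>j\<in>I. b j * b k * c k j)"
    unfolding e1 f1 c_def
    by (simp add: expand sum.distrib algebra_simps) (subst sum.swap, simp add: algebra_simps)
  have stage: "g k \<bullet> T (y' k) + y k \<bullet> T (g' k) = g k \<bullet> T f0 + e0 \<bullet> T (g' k)
      + h * (\<Sum>j\<in>I. a k j * c k j + a k j * c j k)" if "k \<in> I" for k
    unfolding y[OF that] y'[OF that] c_def by (simp add: expand sum.distrib algebra_simps)
  have "(\<Sum>k\<in>I. \<Sum>j\<in>I. b k * a k j * c j k) = (\<Sum>k\<in>I. \<Sum>j\<in>I. b j * a j k * c k j)"
    by (rule sum.swap)
  moreover have "(\<Sum>k\<in>I. \<Sum>j\<in>I. (b k * b j - b k * a k j - b j * a j k) * c k j) = 0"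
    using symplectic by simp
  ultimately have "(\<Sum>k\<in>I. \<Sum>j\<in>I. b k * b j * c k j)
      = (\<Sum>k\<in>I. b k * (\<Sum>j\<in>I. a k j * c k j + a k j * c j k))"
    by (simp add: sum_subtractf sum.distrib sum_distrib_left left_diff_distrib algebra_simps)
  then show ?thesis
    using update stage by (simp add: sum.distrib sum_distrib_left algebra_simps)
qed

lemma symplectic_rk_wedge_increment:
  fixes M :: "real^'n^'n" and dD dY :: "'i \<Rightarrow> 'a \<Rightarrow> real^'n"
  assumes skew: "transpose M = - M"
    and symplectic: "\<And>k j. k \<in> I \<Longrightarrow> j \<in> I \<Longrightarrow> b k * b j - b k * a k j - b j * a j k = 0"
    and update: "\<And>w. dE' w = dE w + h *\<^sub>R (\<Sum>k\<in>I. b k *\<^sub>R dD k w)"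
    and stage: "\<And>k w. k \<in> I \<Longrightarrow> dY k w = dE w + h *\<^sub>R (\<Sum>j\<in>I. a k j *\<^sub>R dD j w)"
  shows "wedge M dE' dE' u v - wedge M dE dE u v = 2 * h * (\<Sum>k\<in>I. b k * wedge M (dD k) (dY k) u v)"
proof -
  have increment: "dE' w \<bullet> (M *v dE' w') - dE w \<bullet> (M *v dE w')
      = h * (\<Sum>k\<in>I. b k * (dD k w \<bullet> (M *v dY k w') + dY k w \<bullet> (M *v dD k w')))" for w w'
    by (rule symplectic_rk_bilinear_increment[where T = "(*v) M"]) (use symplectic update stage in auto)
  have "wedge M dE' dE' u v - wedge M dE dE u v
      = h * (\<Sum>k\<in>I. b k * (wedge M (dD k) (dY k) u v + wedge M (dY k) (dD k) u v))"
    unfolding wedge_def using increment[of u v] increment[of v u]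
    by (simp add: sum_subtractf sum.distrib right_diff_distrib algebra_simps)
  moreover have "wedge M (dY k) (dD k) u v = wedge M (dD k) (dY k) u v" for k
    by (rule wedge_skew_commute[OF skew])
  ultimately show ?thesis
    by (simp add: sum_distrib_left algebra_simps)
qed

lemma has_derivative_rk_relation:
  fixes F G :: "'a::real_normed_vector \<Rightarrow> 'b::real_normed_vector" and H :: "'i \<Rightarrow> 'a \<Rightarrow> 'b"
  assumes relation: "\<And>\<zeta>. F \<zeta> = G \<zeta> + c *\<^sub>R (\<Sum>j\<in>J. w j *\<^sub>R H j \<zeta>)"
    and "(F has_derivative dF) (at \<xi>)" "(G has_derivative dG) (at \<xi>)"
    and "\<And>j. j \<in> J \<Longrightarrow> (H j has_derivative dH j) (at \<xi>)"
  shows "dF h = dG h + c *\<^sub>R (\<Sum>j\<in>J. w j *\<^sub>R dH j h)"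
proof -
  have "(F has_derivative (\<lambda>h. dG h + c *\<^sub>R (\<Sum>j\<in>J. w j *\<^sub>R dH j h))) (at \<xi>)"
    unfolding relation[abs_def] using assms(3,4)
    by (intro derivative_intros) auto
  then show ?thesis
    using has_derivative_unique[OF assms(2)] by metis
qed

lemma rk_direction_wedge_difference:
  fixes M :: "real^'n^'n"
    and E E' dE dE' :: "'i \<Rightarrow> 'j \<Rightarrow> 'l \<Rightarrow> 'a::real_normed_vector \<Rightarrow> real^'n"
    and Y D dY dD :: "'i \<Rightarrow> 'j \<Rightarrow> 'l \<Rightarrow> 'k \<Rightarrow> 'a \<Rightarrow> real^'n"
  assumes "h > 0" and skew: "transpose M = - M"
    and symplectic: "\<And>k \<kappa>. k \<in> K \<Longrightarrow> \<kappa> \<in> K \<Longrightarrow> b k * b \<kappa> - b k * a k \<kappa> - b \<kappa> * a \<kappa> k = 0"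
    and stage: "\<And>i j l k \<zeta>. i \<in> I \<Longrightarrow> j \<in> J \<Longrightarrow> l \<in> L \<Longrightarrow> k \<in> K \<Longrightarrow>
        Y i j l k \<zeta> = E i j l \<zeta> + h *\<^sub>R (\<Sum>\<kappa>\<in>K. a k \<kappa> *\<^sub>R D i j l \<kappa> \<zeta>)"
    and update: "\<And>i j l \<zeta>. i \<in> I \<Longrightarrow> j \<in> J \<Longrightarrow> l \<in> L \<Longrightarrow>
        E' i j l \<zeta> = E i j l \<zeta> + h *\<^sub>R (\<Sum>k\<in>K. b k *\<^sub>R D i j l k \<zeta>)"
    and diff_E: "\<And>i j l. i \<in> I \<Longrightarrow> j \<in> J \<Longrightarrow> l \<in> L \<Longrightarrow> (E i j l has_derivative dE i j l) (at \<xi>)"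
    and diff_E': "\<And>i j l. i \<in> I \<Longrightarrow> j \<in> J \<Longrightarrow> l \<in> L \<Longrightarrow> (E' i j l has_derivative dE' i j l) (at \<xi>)"
    and diff_Y: "\<And>i j l k. i \<in> I \<Longrightarrow> j \<in> J \<Longrightarrow> l \<in> L \<Longrightarrow> k \<in> K \<Longrightarrow>
        (Y i j l k has_derivative dY i j l k) (at \<xi>)"
    and diff_D: "\<And>i j l k. i \<in> I \<Longrightarrow> j \<in> J \<Longrightarrow> l \<in> L \<Longrightarrow> k \<in> K \<Longrightarrow>
        (D i j l k has_derivative dD i j l k) (at \<xi>)"
  shows "((1/2) * (\<Sum>i\<in>I. \<Sum>j\<in>J. \<Sum>l\<in>L. w i j l * wedge M (dE' i j l) (dE' i j l) u v)
      - (1/2) * (\<Sum>i\<in>I. \<Sum>j\<in>J. \<Sum>l\<in>L. w i j l * wedge M (dE i j l) (dE i j l) u v)) / h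
    = (\<Sum>i\<in>I. \<Sum>j\<in>J. \<Sum>l\<in>L. \<Sum>k\<in>K. w i j l * b k * wedge M (dD i j l k) (dY i j l k) u v)"
proof -
  have cell: "wedge M (dE' i j l) (dE' i j l) u v - wedge M (dE i j l) (dE i j l) u v
      = 2 * h * (\<Sum>k\<in>K. b k * wedge M (dD i j l k) (dY i j l k) u v)"
    if ijl: "i \<in> I" "j \<in> J" "l \<in> L" for i j l
  proof (rule symplectic_rk_wedge_increment[OF skew symplectic])
    show "dE' i j l w = dE i j l w + h *\<^sub>R (\<Sum>k\<in>K. b k *\<^sub>R dD i j l k w)" for w
      by (rule has_derivative_rk_relation[where F = "E' i j l" and G = "E i j l" and H = "D i j l"])
        (use update[OF ijl] diff_E[OF ijl] diff_E'[OF ijl] diff_D[OF ijl] in auto)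
    show "dY i j l k w = dE i j l w + h *\<^sub>R (\<Sum>\<kappa>\<in>K. a k \<kappa> *\<^sub>R dD i j l \<kappa> w)"
      if "k \<in> K" for k w
      by (rule has_derivative_rk_relation[where F = "Y i j l k" and G = "E i j l" and H = "D i j l"])
        (use stage[OF ijl that] diff_E[OF ijl] diff_Y[OF ijl that] diff_D[OF ijl] in auto)
  qed
  have "(\<Sum>i\<in>I. \<Sum>j\<in>J. \<Sum>l\<in>L. w i j l * wedge M (dE' i j l) (dE' i j l) u v)
      - (\<Sum>i\<in>I. \<Sum>j\<in>J. \<Sum>l\<in>L. w i j l * wedge M (dE i j l) (dE i j l) u v)
    = (\<Sum>i\<in>I. \<Sum>j\<in>J. \<Sum>l\<in>L. w i j l * (wedge M (dE' i j l) (dE' i j l) u v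
        - wedge M (dE i j l) (dE i j l) u v))"
    by (simp add: sum_subtractf right_diff_distrib)
  also have "\<dots> = 2 * h * (\<Sum>i\<in>I. \<Sum>j\<in>J. \<Sum>l\<in>L. \<Sum>k\<in>K. w i j l * b k * wedge M (dD i j l k) (dY i j l k) u v)"
    unfolding sum_distrib_left by (intro sum.cong refl) (simp add: cell sum_distrib_left mult_ac)
  finally show ?thesis
    using \<open>h > 0\<close> by (simp add: field_simps)
qed

lemma hamiltonian_stage_wedge_sum:
  fixes K Lx Ly Lz :: "real^'n^'n" and Dt Dx Dy Dz Y dDt dDx dDy dDz dY :: "'a::real_normed_vector \<Rightarrow> real^'n"
  assumes "h \<noteq> 0"
    and skew: "transpose K = - K" "transpose Lx = - Lx" "transpose Ly = - Ly" "transpose Lz = - Lz"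
    and stage: "\<And>\<zeta>. h *\<^sub>R (K *v Dt \<zeta> + Lx *v Dx \<zeta> + Ly *v Dy \<zeta> + Lz *v Dz \<zeta>) = c *\<^sub>R Y \<zeta>"
    and "(Dt has_derivative dDt) (at \<xi>)" "(Dx has_derivative dDx) (at \<xi>)"
      "(Dy has_derivative dDy) (at \<xi>)" "(Dz has_derivative dDz) (at \<xi>)"
      "(Y has_derivative dY) (at \<xi>)"
  shows "wedge K dDt dY u v + wedge Lx dDx dY u v + wedge Ly dDy dY u v + wedge Lz dDz dY u v = 0"
proof -
  note matrix = bounded_linear.has_derivative[OF matrix_vector_mul_bounded_linear]
  have "((\<lambda>\<zeta>. h *\<^sub>R (K *v Dt \<zeta> + Lx *v Dx \<zeta> + Ly *v Dy \<zeta> + Lz *v Dz \<zeta>)) has_derivative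
      (\<lambda>w. h *\<^sub>R (K *v dDt w + Lx *v dDx w + Ly *v dDy w + Lz *v dDz w))) (at \<xi>)"
    using assms(7-10) by (intro has_derivative_scaleR_right has_derivative_add matrix)
  moreover have "((\<lambda>\<zeta>. c *\<^sub>R Y \<zeta>) has_derivative (\<lambda>w. c *\<^sub>R dY w)) (at \<xi>)"
    using assms(11) by (rule has_derivative_scaleR_right)
  ultimately have "(\<lambda>w. h *\<^sub>R (K *v dDt w + Lx *v dDx w + Ly *v dDy w + Lz *v dDz w)) = (\<lambda>w. c *\<^sub>R dY w)"
    unfolding stage by (rule has_derivative_unique)
  then have linearized: "h *\<^sub>R (K *v dDt w + Lx *v dDx w + Ly *v dDy w + Lz *v dDz w) = c *\<^sub>R dY w" for w
    by (rule fun_cong)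
  have "h * (wedge K dDt dY u v + wedge Lx dDx dY u v + wedge Ly dDy dY u v + wedge Lz dDz dY u v)
      = (h *\<^sub>R (K *v dDt v + Lx *v dDx v + Ly *v dDy v + Lz *v dDz v)) \<bullet> dY u
        - (h *\<^sub>R (K *v dDt u + Lx *v dDx u + Ly *v dDy u + Lz *v dDz u)) \<bullet> dY v"
    by (simp add: wedge_skew_eq[OF skew(1)] wedge_skew_eq[OF skew(2)] wedge_skew_eq[OF skew(3)]
        wedge_skew_eq[OF skew(4)] inner_add_left algebra_simps)
  also have "\<dots> = 0"
    unfolding linearized by (simp add: inner_commute)
  finally show ?thesis
    using \<open>h \<noteq> 0\<close> by simp
qed

theorem mainTheorem2:
  fixes r s io sg :: nat
    and a :: "nat \<Rightarrow> nat \<Rightarrow> real" and b :: "nat \<Rightarrow> real"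
    and atl :: "nat \<Rightarrow> nat \<Rightarrow> real" and bt :: "nat \<Rightarrow> real"
    and ab :: "nat \<Rightarrow> nat \<Rightarrow> real" and bb :: "nat \<Rightarrow> real"
    and ah :: "nat \<Rightarrow> nat \<Rightarrow> real" and bh :: "nat \<Rightarrow> real"
    and tau dx dy dz lam :: real
    and dW :: "nat \<Rightarrow> nat \<Rightarrow> nat \<Rightarrow> nat \<Rightarrow> real"
    and Y Dt Dx Dy Dz :: "nat \<Rightarrow> nat \<Rightarrow> nat \<Rightarrow> nat \<Rightarrow> 'a::real_normed_vector \<Rightarrow> real^6"
    and E0 E1 :: "nat \<Rightarrow> nat \<Rightarrow> nat \<Rightarrow> 'a \<Rightarrow> real^6"
    and X0 X1 :: "nat \<Rightarrow> nat \<Rightarrow> nat \<Rightarrow> 'a \<Rightarrow> real^6"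
    and W0 W1 :: "nat \<Rightarrow> nat \<Rightarrow> nat \<Rightarrow> 'a \<Rightarrow> real^6"
    and Z0 Z1 :: "nat \<Rightarrow> nat \<Rightarrow> nat \<Rightarrow> 'a \<Rightarrow> real^6"
    and dY dDt dDx dDy dDz :: "nat \<Rightarrow> nat \<Rightarrow> nat \<Rightarrow> nat \<Rightarrow> 'a \<Rightarrow> real^6"
    and dE0 dE1 dX0 dX1 dW0 dW1 dZ0 dZ1 :: "nat \<Rightarrow> nat \<Rightarrow> nat \<Rightarrow> 'a \<Rightarrow> real^6"
    and \<zeta>0 :: 'a
  assumes tau_pos: "tau > 0" and dx_pos: "dx > 0" and dy_pos: "dy > 0" and dz_pos: "dz > 0"
    \<comment> \<open>symplecticity conditions on the four sets of Runge-Kutta coefficients\<close>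
    and cond_t: "\<And>k j. k \<in> {1..r} \<Longrightarrow> j \<in> {1..r} \<Longrightarrow> b k * b j - b k * a k j - b j * a j k = 0"
    and cond_y: "\<And>p q. p \<in> {1..io} \<Longrightarrow> q \<in> {1..io} \<Longrightarrow> bb p * bb q - bb p * ab p q - bb q * ab q p = 0"
    and cond_x: "\<And>m n. m \<in> {1..s} \<Longrightarrow> n \<in> {1..s} \<Longrightarrow> bt m * bt n - bt m * atl m n - bt n * atl n m = 0"
    and cond_z: "\<And>l v. l \<in> {1..sg} \<Longrightarrow> v \<in> {1..sg} \<Longrightarrow> bh l * bh v - bh l * ah l v - bh v * ah v l = 0"
    \<comment> \<open>the scheme on one space-time cell, holding at every point \<zeta> of phase space\<close>
    and rk_t_stage: "\<And>\<zeta> m p l k. m \<in> {1..s} \<Longrightarrow> p \<in> {1..io} \<Longrightarrow> l \<in> {1..sg} \<Longrightarrow> k \<in> {1..r} \<Longrightarrow>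
        Y m p l k \<zeta> = E0 m p l \<zeta> + tau *\<^sub>R (\<Sum>j\<in>{1..r}. a k j *\<^sub>R Dt m p l j \<zeta>)"
    and rk_t_update: "\<And>\<zeta> m p l. m \<in> {1..s} \<Longrightarrow> p \<in> {1..io} \<Longrightarrow> l \<in> {1..sg} \<Longrightarrow>
        E1 m p l \<zeta> = E0 m p l \<zeta> + tau *\<^sub>R (\<Sum>k\<in>{1..r}. b k *\<^sub>R Dt m p l k \<zeta>)"
    and rk_x_stage: "\<And>\<zeta> m p l k. m \<in> {1..s} \<Longrightarrow> p \<in> {1..io} \<Longrightarrow> l \<in> {1..sg} \<Longrightarrow> k \<in> {1..r} \<Longrightarrow>
        Y m p l k \<zeta> = X0 p l k \<zeta> + dx *\<^sub>R (\<Sum>n\<in>{1..s}. atl m n *\<^sub>R Dx n p l k \<zeta>)"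
    and rk_x_update: "\<And>\<zeta> p l k. p \<in> {1..io} \<Longrightarrow> l \<in> {1..sg} \<Longrightarrow> k \<in> {1..r} \<Longrightarrow>
        X1 p l k \<zeta> = X0 p l k \<zeta> + dx *\<^sub>R (\<Sum>m\<in>{1..s}. bt m *\<^sub>R Dx m p l k \<zeta>)"
    and rk_y_stage: "\<And>\<zeta> m p l k. m \<in> {1..s} \<Longrightarrow> p \<in> {1..io} \<Longrightarrow> l \<in> {1..sg} \<Longrightarrow> k \<in> {1..r} \<Longrightarrow>
        Y m p l k \<zeta> = W0 m l k \<zeta> + dy *\<^sub>R (\<Sum>q\<in>{1..io}. ab p q *\<^sub>R Dy m q l k \<zeta>)"
    and rk_y_update: "\<And>\<zeta> m l k. m \<in> {1..s} \<Longrightarrow> l \<in> {1..sg} \<Longrightarrow> k \<in> {1..r} \<Longrightarrow>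
        W1 m l k \<zeta> = W0 m l k \<zeta> + dy *\<^sub>R (\<Sum>p\<in>{1..io}. bb p *\<^sub>R Dy m p l k \<zeta>)"
    and rk_z_stage: "\<And>\<zeta> m p l k. m \<in> {1..s} \<Longrightarrow> p \<in> {1..io} \<Longrightarrow> l \<in> {1..sg} \<Longrightarrow> k \<in> {1..r} \<Longrightarrow>
        Y m p l k \<zeta> = Z0 m p k \<zeta> + dz *\<^sub>R (\<Sum>v\<in>{1..sg}. ah l v *\<^sub>R Dz m p v k \<zeta>)"
    and rk_z_update: "\<And>\<zeta> m p k. m \<in> {1..s} \<Longrightarrow> p \<in> {1..io} \<Longrightarrow> k \<in> {1..r} \<Longrightarrow>
        Z1 m p k \<zeta> = Z0 m p k \<zeta> + dz *\<^sub>R (\<Sum>u\<in>{1..sg}. bh u *\<^sub>R Dz m p u k \<zeta>)"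
    and stage_eq: "\<And>\<zeta> m p l k. m \<in> {1..s} \<Longrightarrow> p \<in> {1..io} \<Longrightarrow> l \<in> {1..sg} \<Longrightarrow> k \<in> {1..r} \<Longrightarrow>
        tau *\<^sub>R (Kmat *v Dt m p l k \<zeta>)
        + tau *\<^sub>R (L1mat *v Dx m p l k \<zeta> + L2mat *v Dy m p l k \<zeta> + L3mat *v Dz m p l k \<zeta>)
        = dW m p l k *\<^sub>R gradS lam (Y m p l k \<zeta>)"
    \<comment> \<open>differentials (exterior derivatives in phase space) at the point \<zeta>0\<close>
    and dif_Y: "\<And>m p l k. m \<in> {1..s} \<Longrightarrow> p \<in> {1..io} \<Longrightarrow> l \<in> {1..sg} \<Longrightarrow> k \<in> {1..r} \<Longrightarrow>
        (Y m p l k has_derivative dY m p l k) (at \<zeta>0) \<and>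
        (Dt m p l k has_derivative dDt m p l k) (at \<zeta>0) \<and>
        (Dx m p l k has_derivative dDx m p l k) (at \<zeta>0) \<and>
        (Dy m p l k has_derivative dDy m p l k) (at \<zeta>0) \<and>
        (Dz m p l k has_derivative dDz m p l k) (at \<zeta>0)"
    and dif_E: "\<And>m p l. m \<in> {1..s} \<Longrightarrow> p \<in> {1..io} \<Longrightarrow> l \<in> {1..sg} \<Longrightarrow>
        (E0 m p l has_derivative dE0 m p l) (at \<zeta>0) \<and> (E1 m p l has_derivative dE1 m p l) (at \<zeta>0)"
    and dif_X: "\<And>p l k. p \<in> {1..io} \<Longrightarrow> l \<in> {1..sg} \<Longrightarrow> k \<in> {1..r} \<Longrightarrow>
        (X0 p l k has_derivative dX0 p l k) (at \<zeta>0) \<and> (X1 p l k has_derivative dX1 p l k) (at \<zeta>0)"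
    and dif_W: "\<And>m l k. m \<in> {1..s} \<Longrightarrow> l \<in> {1..sg} \<Longrightarrow> k \<in> {1..r} \<Longrightarrow>
        (W0 m l k has_derivative dW0 m l k) (at \<zeta>0) \<and> (W1 m l k has_derivative dW1 m l k) (at \<zeta>0)"
    and dif_Z: "\<And>m p k. m \<in> {1..s} \<Longrightarrow> p \<in> {1..io} \<Longrightarrow> k \<in> {1..r} \<Longrightarrow>
        (Z0 m p k has_derivative dZ0 m p k) (at \<zeta>0) \<and> (Z1 m p k has_derivative dZ1 m p k) (at \<zeta>0)"
  shows "\<forall>u v.
    ((1/2) * (\<Sum>m\<in>{1..s}. \<Sum>p\<in>{1..io}. \<Sum>l\<in>{1..sg}. bt m * bb p * bh l * wedge2 Kmat (dE1 m p l) u v)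
     - (1/2) * (\<Sum>m\<in>{1..s}. \<Sum>p\<in>{1..io}. \<Sum>l\<in>{1..sg}. bt m * bb p * bh l * wedge2 Kmat (dE0 m p l) u v)) / tau
  + ((1/2) * (\<Sum>k\<in>{1..r}. \<Sum>p\<in>{1..io}. \<Sum>l\<in>{1..sg}. b k * bb p * bh l * wedge2 L1mat (dX1 p l k) u v)
     - (1/2) * (\<Sum>k\<in>{1..r}. \<Sum>p\<in>{1..io}. \<Sum>l\<in>{1..sg}. b k * bb p * bh l * wedge2 L1mat (dX0 p l k) u v)) / dx
  + ((1/2) * (\<Sum>k\<in>{1..r}. \<Sum>m\<in>{1..s}. \<Sum>l\<in>{1..sg}. b k * bt m * bh l * wedge2 L2mat (dW1 m l k) u v)
     - (1/2) * (\<Sum>k\<in>{1..r}. \<Sum>m\<in>{1..s}. \<Sum>l\<in>{1..sg}. b k * bt m * bh l * wedge2 L2mat (dW0 m l k) u v)) / dy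
  + ((1/2) * (\<Sum>k\<in>{1..r}. \<Sum>m\<in>{1..s}. \<Sum>p\<in>{1..io}. b k * bt m * bb p * wedge2 L3mat (dZ1 m p k) u v)
     - (1/2) * (\<Sum>k\<in>{1..r}. \<Sum>m\<in>{1..s}. \<Sum>p\<in>{1..io}. b k * bt m * bb p * wedge2 L3mat (dZ0 m p k) u v)) / dz
  = 0" (is "\<forall>u v. ?time u v + ?xflux u v + ?yflux u v + ?zflux u v = 0")
proof (intro allI)
  fix u v :: 'a
  have diff_stage:
    "(Y m p l k has_derivative dY m p l k) (at \<zeta>0)" "(Dt m p l k has_derivative dDt m p l k) (at \<zeta>0)"
    "(Dx m p l k has_derivative dDx m p l k) (at \<zeta>0)" "(Dy m p l k has_derivative dDy m p l k) (at \<zeta>0)"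
    "(Dz m p l k has_derivative dDz m p l k) (at \<zeta>0)"
    if "m \<in> {1..s}" "p \<in> {1..io}" "l \<in> {1..sg}" "k \<in> {1..r}" for m p l k
    using dif_Y[OF that] by blast+
  have time: "?time u v = (\<Sum>m\<in>{1..s}. \<Sum>p\<in>{1..io}. \<Sum>l\<in>{1..sg}. \<Sum>k\<in>{1..r}.
      bt m * bb p * bh l * b k * wedge Kmat (dDt m p l k) (dY m p l k) u v)"
    unfolding wedge2_eq_wedge
    by (rule rk_direction_wedge_difference[where Y = Y and D = Dt and E = E0 and E' = E1 and a = a and \<xi> = \<zeta>0])
      (rule tau_pos Kmat_skew cond_t rk_t_stage rk_t_update dif_E[THEN conjunct1] dif_E[THEN conjunct2] diff_stage; assumption)+
  have xflux: "?xflux u v = (\<Sum>k\<in>{1..r}. \<Sum>p\<in>{1..io}. \<Sum>l\<in>{1..sg}. \<Sum>m\<in>{1..s}.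
      b k * bb p * bh l * bt m * wedge L1mat (dDx m p l k) (dY m p l k) u v)"
    unfolding wedge2_eq_wedge
    by (rule rk_direction_wedge_difference[where Y = "\<lambda>k p l m. Y m p l k" and D = "\<lambda>k p l m. Dx m p l k"
          and E = "\<lambda>k p l. X0 p l k" and E' = "\<lambda>k p l. X1 p l k" and a = atl and \<xi> = \<zeta>0])
      (rule dx_pos L1mat_skew cond_x rk_x_stage rk_x_update dif_X[THEN conjunct1] dif_X[THEN conjunct2] diff_stage; assumption)+
  have yflux: "?yflux u v = (\<Sum>k\<in>{1..r}. \<Sum>m\<in>{1..s}. \<Sum>l\<in>{1..sg}. \<Sum>p\<in>{1..io}.
      b k * bt m * bh l * bb p * wedge L2mat (dDy m p l k) (dY m p l k) u v)"
    unfolding wedge2_eq_wedge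
    by (rule rk_direction_wedge_difference[where Y = "\<lambda>k m l p. Y m p l k" and D = "\<lambda>k m l p. Dy m p l k"
          and E = "\<lambda>k m l. W0 m l k" and E' = "\<lambda>k m l. W1 m l k" and a = ab and \<xi> = \<zeta>0])
      (rule dy_pos L2mat_skew cond_y rk_y_stage rk_y_update dif_W[THEN conjunct1] dif_W[THEN conjunct2] diff_stage; assumption)+
  have zflux: "?zflux u v = (\<Sum>k\<in>{1..r}. \<Sum>m\<in>{1..s}. \<Sum>p\<in>{1..io}. \<Sum>l\<in>{1..sg}.
      b k * bt m * bb p * bh l * wedge L3mat (dDz m p l k) (dY m p l k) u v)"
    unfolding wedge2_eq_wedge
    by (rule rk_direction_wedge_difference[where Y = "\<lambda>k m p l. Y m p l k" and D = "\<lambda>k m p l. Dz m p l k"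
          and E = "\<lambda>k m p. Z0 m p k" and E' = "\<lambda>k m p. Z1 m p k" and a = ah and \<xi> = \<zeta>0])
      (rule dz_pos L3mat_skew cond_z rk_z_stage rk_z_update dif_Z[THEN conjunct1] dif_Z[THEN conjunct2] diff_stage; assumption)+
  have cell: "wedge Kmat (dDt m p l k) (dY m p l k) u v + wedge L1mat (dDx m p l k) (dY m p l k) u v
      + wedge L2mat (dDy m p l k) (dY m p l k) u v + wedge L3mat (dDz m p l k) (dY m p l k) u v = 0"
    if "m \<in> {1..s}" "p \<in> {1..io}" "l \<in> {1..sg}" "k \<in> {1..r}" for m p l k
    by (rule hamiltonian_stage_wedge_sum[where h = tau and c = "dW m p l k * lam" and Y = "Y m p l k"
          and Dt = "Dt m p l k" and Dx = "Dx m p l k" and Dy = "Dy m p l k" and Dz = "Dz m p l k"])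
      (use tau_pos Kmat_skew L1mat_skew L2mat_skew L3mat_skew stage_eq[OF that] diff_stage[OF that]
        in \<open>auto simp: gradS_def scaleR_add_right add.assoc\<close>)
  have "?time u v + ?xflux u v + ?yflux u v + ?zflux u v
      = (\<Sum>m\<in>{1..s}. \<Sum>p\<in>{1..io}. \<Sum>l\<in>{1..sg}. \<Sum>k\<in>{1..r}. bt m * bb p * bh l * b k *
          (wedge Kmat (dDt m p l k) (dY m p l k) u v + wedge L1mat (dDx m p l k) (dY m p l k) u v
           + wedge L2mat (dDy m p l k) (dY m p l k) u v + wedge L3mat (dDz m p l k) (dY m p l k) u v))"
    unfolding time xflux yflux zflux
    \<comment> \<open>bring every sum into the order \<open>m, p, l, k\<close>: \<open>k\<close> moves inwards, \<open>m\<close> outwards\<close>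
    by (simp only: sum.swap[where A = "{1..r}"] sum.swap[where B = "{1..s}"]
        sum.swap[where A = "{1..sg}" and B = "{1..io}"])
      (simp add: distrib_left sum.distrib mult_ac)
  also have "\<dots> = 0"
    by (intro sum.neutral ballI) (simp add: cell)
  finally show "?time u v + ?xflux u v + ?yflux u v + ?zflux u v = 0" .
qed

end
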